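(* Let $\bar\mu_0\ge0$. For every $1\le j\le k-1$ the operator $C^{(j)}$ below is well defined (the inverse exists) and $$G^\eta_{j+1}=a_j^2(L^j\eta)^{-4}\,G^\eta_jQ_{\Omega,j}^*\,C^{(j)}\,Q_{\Omega,j}G^\eta_j+G^\eta_j .$$ Consequently $$G_k(\Omega)=G^\eta_k=\sum_{j=1}^{k-1}a_j^2(L^j\eta)^{-4}\,G^\eta_jQ_{\Omega,j}^*\,C^{(j)}\,Q_{\Omega,j}G^\eta_j+G^\eta_1$$ (the sum being empty if $k=1$).
   Context: Setup: $d\ge1$, odd integer $L>1$, integers $k\ge1$, $m\ge k$, $\eta=L^{-k}$, $\Omega=\eta\{0,\dots,L^m-1\}^d$, $\Omega_j=(L^j\eta)\{0,\dots,L^{m-j}-1\}^d$ for $0\le j\le m$. $\mathcal L^2(\Omega)$ has inner product $\eta^d\sum_{x\in\Omega}\bar fg$ and $\mathcal L^2(\Omega_j)$ has $(L^j\eta)^d\sum_{y\in\Omega_j}\bar fg$. $B_j(y)=\{x\in\eta\mathbb Z^d: y_\mu\le x_\mu<y_\mu+L^j\eta\ \forall\mu\}$; $Q_{\Omega,j}:\mathcal L^2(\Omega)\to\mathcal L^2(\Omega_j)$, $(Q_{\Omega,j}f)(y)=L^{-jd}\sum_{x\in B_j(y)}f(x)$, with adjoint $(Q_{\Omega,j}^*h)(x)=h(y_x)$, $x\in B_j(y_x)$. The one-step averaging $Q_{\Omega_j}:\mathcal L^2(\Omega_j)\to\mathcal L^2(\Omega_{j+1})$ is $(Q_{\Omega_j}\psi)(y)=L^{-d}\sum_{y'\in\Omega_j\cap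 B_{j+1}(y)}\psi(y')$. Neumann Laplacian $(\Delta^\eta_\Omega f)(x)=\eta^{-2}\sum_\mu(f(x+\eta e_\mu)-2f(x)+f(x-\eta e_\mu))$ with $f(x\pm\eta e_\mu):=f(x)$ if $x\pm\eta e_\mu\notin\Omega$. Fix $a\in(0,1]$, $a_j=a\frac{1-L^{-2}}{1-L^{-2j}}$, $\bar\mu_j=L^{2j}\bar\mu_0$. Define $G^\eta_j=\big(-\Delta^\eta_\Omega+\bar\mu_k+a_j(L^j\eta)^{-2}Q_{\Omega,j}^*Q_{\Omega,j}\big)^{-1}$ (note $G^\eta_k=G_k(\Omega)=(-\Delta^\eta_\Omega+\bar\mu_k+a_kQ_{\Omega,k}^*Q_{\Omega,k})^{-1}$), $\Delta^{(j)}=a_j(L^j\eta)^{-2}-a_j^2(L^j\eta)^{-4}Q_{\Omega,j}G^\eta_jQ_{\Omega,j}^*$ on $\mathcal L^2(\Omega_j)$, and $C^{(j)}=\big(\Delta^{(j)}+a(L^{j+1}\eta)^{-2}Q_{\Omega_j}^*Q_{\Omega_j}\big)^{-1}$ on $\mathcal L^2(\Omega_j)$. *)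

theory Defs
  imports "HOL-Analysis.Analysis"
begin

(* Points of the lattice eta Z^d are represented by their real coordinates,
   x :: real^'d, where the finite type 'd indexes the d directions (d = CARD('d)).
   Functions on a finite set S of points are functions  real^'d => real  vanishing off S. *)

type_synonym ('d) fn = "real^('d::finite) \<Rightarrow> real"

definition eta :: "nat \<Rightarrow> nat \<Rightarrow> real" where
  "eta L k = 1 / real L ^ k"

definition Lat :: "real \<Rightarrow> nat \<Rightarrow> (real^('d::finite)) set" where
  "Lat s N = {x. \<forall>\<mu>. \<exists>n::nat. n < N \<and> x $ \<mu> = s * real n}"

definition Omega :: "nat \<Rightarrow> nat \<Rightarrow> nat \<Rightarrow> (real^('d::finite)) set" where
  "Omega L k m = Lat (eta L k) (L ^ m)"

definition OmegaJ :: "nat \<Rightarrow> nat \<Rightarrow> nat \<Rightarrow> nat \<Rightarrow> (real^('d::finite)) set" where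
  "OmegaJ L k m j = Lat (real L ^ j * eta L k) (L ^ (m - j))"

definition Bj :: "nat \<Rightarrow> nat \<Rightarrow> nat \<Rightarrow> real^'d \<Rightarrow> (real^('d::finite)) set" where
  "Bj L k j y = {x. (\<forall>\<mu>. \<exists>n::int. x $ \<mu> = eta L k * of_int n) \<and>
       (\<forall>\<mu>. y $ \<mu> \<le> x $ \<mu> \<and> x $ \<mu> < y $ \<mu> + real L ^ j * eta L k)}"

definition sp :: "(real^('d::finite)) set \<Rightarrow> ('d::finite) fn set" where
  "sp S = {f. \<forall>x. x \<notin> S \<longrightarrow> f x = 0}"

definition invertible_on :: "(real^('d::finite)) set \<Rightarrow> (('d::finite) fn \<Rightarrow> ('d::finite) fn) \<Rightarrow> bool" where
  "invertible_on S A \<longleftrightarrow> bij_betw A (sp S) (sp S)"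

definition inv_on :: "(real^('d::finite)) set \<Rightarrow> (('d::finite) fn \<Rightarrow> ('d::finite) fn) \<Rightarrow> (('d::finite) fn \<Rightarrow> ('d::finite) fn)" where
  "inv_on S A = the_inv_into (sp S) A"

definition QO :: "nat \<Rightarrow> nat \<Rightarrow> nat \<Rightarrow> nat \<Rightarrow> ('d::finite) fn \<Rightarrow> ('d::finite) fn" where
  "QO L k m j f = (\<lambda>y. if y \<in> OmegaJ L k m j
      then (1 / real L ^ (j * CARD('d))) * (\<Sum>x\<in>Bj L k j y. f x) else 0)"

definition QOadj :: "nat \<Rightarrow> nat \<Rightarrow> nat \<Rightarrow> nat \<Rightarrow> ('d::finite) fn \<Rightarrow> ('d::finite) fn" where
  "QOadj L k m j h = (\<lambda>x. if x \<in> Omega L k m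
      then h (THE y. y \<in> OmegaJ L k m j \<and> x \<in> Bj L k j y) else 0)"

definition Qstep :: "nat \<Rightarrow> nat \<Rightarrow> nat \<Rightarrow> nat \<Rightarrow> ('d::finite) fn \<Rightarrow> ('d::finite) fn" where
  "Qstep L k m j \<psi> = (\<lambda>y. if y \<in> OmegaJ L k m (j + 1)
      then (1 / real L ^ CARD('d)) * (\<Sum>y'\<in>OmegaJ L k m j \<inter> Bj L k (j + 1) y. \<psi> y') else 0)"

definition Qstepadj :: "nat \<Rightarrow> nat \<Rightarrow> nat \<Rightarrow> nat \<Rightarrow> ('d::finite) fn \<Rightarrow> ('d::finite) fn" where
  "Qstepadj L k m j h = (\<lambda>y'. if y' \<in> OmegaJ L k m j
      then h (THE y. y \<in> OmegaJ L k m (j + 1) \<and> y' \<in> Bj L k (j + 1) y) else 0)"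

text \<open>Neumann Laplacian on Omega.\<close>
definition nb :: "(real^('d::finite)) set \<Rightarrow> ('d::finite) fn \<Rightarrow> real^'d \<Rightarrow> real^'d \<Rightarrow> real" where
  "nb S f x v = (if x + v \<in> S then f (x + v) else f x)"

definition Lap :: "nat \<Rightarrow> nat \<Rightarrow> nat \<Rightarrow> ('d::finite) fn \<Rightarrow> ('d::finite) fn" where
  "Lap L k m f = (\<lambda>x. if x \<in> Omega L k m then
      (1 / eta L k ^ 2) * (\<Sum>\<mu>\<in>UNIV.
         nb (Omega L k m) f x (eta L k *\<^sub>R axis \<mu> 1) - 2 * f x
         + nb (Omega L k m) f x (- (eta L k *\<^sub>R axis \<mu> 1)))
      else 0)"

definition aj :: "real \<Rightarrow> nat \<Rightarrow> nat \<Rightarrow> real" where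
  "aj a L j = a * (1 - 1 / real L ^ 2) / (1 - 1 / real L ^ (2 * j))"

definition mubar :: "real \<Rightarrow> nat \<Rightarrow> nat \<Rightarrow> real" where
  "mubar mu0 L j = real L ^ (2 * j) * mu0"

definition Aop :: "nat \<Rightarrow> nat \<Rightarrow> nat \<Rightarrow> real \<Rightarrow> real \<Rightarrow> nat \<Rightarrow> ('d::finite) fn \<Rightarrow> ('d::finite) fn" where
  "Aop L k m a mu0 j f = (\<lambda>x. if x \<in> Omega L k m then
      - Lap L k m f x + mubar mu0 L k * f x
      + aj a L j / (real L ^ j * eta L k) ^ 2 * QOadj L k m j (QO L k m j f) x else 0)"

definition Geta :: "nat \<Rightarrow> nat \<Rightarrow> nat \<Rightarrow> real \<Rightarrow> real \<Rightarrow> nat \<Rightarrow> ('d::finite) fn \<Rightarrow> ('d::finite) fn" where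
  "Geta L k m a mu0 j = inv_on (Omega L k m) (Aop L k m a mu0 j)"

definition GkOmega :: "nat \<Rightarrow> nat \<Rightarrow> nat \<Rightarrow> real \<Rightarrow> real \<Rightarrow> ('d::finite) fn \<Rightarrow> ('d::finite) fn" where
  "GkOmega L k m a mu0 = inv_on (Omega L k m) (\<lambda>f x. if x \<in> Omega L k m then
      - Lap L k m f x + mubar mu0 L k * f x
      + aj a L k * QOadj L k m k (QO L k m k f) x else 0)"

definition Delta :: "nat \<Rightarrow> nat \<Rightarrow> nat \<Rightarrow> real \<Rightarrow> real \<Rightarrow> nat \<Rightarrow> ('d::finite) fn \<Rightarrow> ('d::finite) fn" where
  "Delta L k m a mu0 j \<psi> = (\<lambda>y. if y \<in> OmegaJ L k m j then
      aj a L j / (real L ^ j * eta L k) ^ 2 * \<psi> y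
      - (aj a L j) ^ 2 / (real L ^ j * eta L k) ^ 4
          * QO L k m j (Geta L k m a mu0 j (QOadj L k m j \<psi>)) y else 0)"

definition Cpre :: "nat \<Rightarrow> nat \<Rightarrow> nat \<Rightarrow> real \<Rightarrow> real \<Rightarrow> nat \<Rightarrow> ('d::finite) fn \<Rightarrow> ('d::finite) fn" where
  "Cpre L k m a mu0 j \<psi> = (\<lambda>y. if y \<in> OmegaJ L k m j then
      Delta L k m a mu0 j \<psi> y
      + a / (real L ^ (j + 1) * eta L k) ^ 2 * Qstepadj L k m j (Qstep L k m j \<psi>) y else 0)"

definition Cj :: "nat \<Rightarrow> nat \<Rightarrow> nat \<Rightarrow> real \<Rightarrow> real \<Rightarrow> nat \<Rightarrow> ('d::finite) fn \<Rightarrow> ('d::finite) fn" where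
  "Cj L k m a mu0 j = inv_on (OmegaJ L k m j) (Cpre L k m a mu0 j)"

definition Term :: "nat \<Rightarrow> nat \<Rightarrow> nat \<Rightarrow> real \<Rightarrow> real \<Rightarrow> nat \<Rightarrow> ('d::finite) fn \<Rightarrow> ('d::finite) fn" where
  "Term L k m a mu0 j f = (\<lambda>x. (aj a L j) ^ 2 / (real L ^ j * eta L k) ^ 4 *
      Geta L k m a mu0 j (QOadj L k m j (Cj L k m a mu0 j (QO L k m j (Geta L k m a mu0 j f)))) x)"

end

theory Submission
  imports Defs "HOL-Library.Function_Algebras"
begin

(* The operator A_{j+1} = -\<Delta> + \<mu>_k + a_{j+1}(L^{j+1}\<eta>)^-2 Q*_{\<Omega>,j+1} Q_{\<Omega>,j+1} is a
   finite-rank update of A_j: since Q_{\<Omega>,j+1} = Q_{\<Omega>_j} Q_{\<Omega>,j} and a_{j+1}(L^{j+1}\<eta>)^-2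
   is the parallel sum of B = a_j(L^j\<eta>)^-2 and c = a(L^{j+1}\<eta>)^-2, one has
   A_{j+1} = A_j - B^2 Q*_{\<Omega>,j} (B + c P)^-1 Q_{\<Omega>,j} with P = Q*_{\<Omega>_j} Q_{\<Omega>_j} a projection.
   The Woodbury identity then gives G_{j+1} = G_j + B^2 G_j Q*_{\<Omega>,j} S^-1 Q_{\<Omega>,j} G_j, where
   S = B + c P - B^2 Q_{\<Omega>,j} G_j Q*_{\<Omega>,j} is exactly the operator inverted by C^(j); S is
   invertible because A_j and A_{j+1} are. Each A_j is invertible on the finite-dimensional space
   L^2(\<Omega>) because it is injective: <f, A_j f> = 0 forces f to be constant along lattice edges,
   hence constant on the blocks B_j(y), and to have vanishing block averages, so f = 0.
   Summing the recursion over j telescopes to the formula for G_k(\<Omega>) = G_k^\<eta>. *)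

instantiation "fun" :: (type, real_vector) real_vector
begin
definition scaleR_fun :: "real \<Rightarrow> ('a \<Rightarrow> 'b) \<Rightarrow> 'a \<Rightarrow> 'b" where
  "scaleR_fun c f = (\<lambda>x. c *\<^sub>R f x)"
instance by standard (auto simp: scaleR_fun_def plus_fun_def scaleR_add_right scaleR_add_left)
end

lemma scaleR_fun_apply [simp]: "(c *\<^sub>R f) x = c *\<^sub>R f x"
  by (simp add: scaleR_fun_def)

lemma linear_inj_on_span_imp_surj:
  fixes T :: "'v::real_vector \<Rightarrow> 'v"
  assumes X: "finite X" and lin: "linear T" and into: "T ` span X \<subseteq> span X"
    and inj: "inj_on T (span X)"
  shows "T ` span X = span X"
proof -
  obtain B where B: "B \<subseteq> span X" "independent B" "span X \<subseteq> span B" "card B = dim (span X)"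
    using basis_exists by blast
  have fin_B: "finite B"
    using independent_span_bound[OF X B(2) B(1)] by auto
  have span_B: "span B = span X"
  proof
    show "span B \<subseteq> span X" using B(1) by (simp add: span_minimal subspace_span)
  qed (use B(3) in simp)
  have indep_TB: "independent (T ` B)"
    using linear_independent_injective_image[OF lin B(2)] inj span_B by simp
  have card_TB: "card (T ` B) = card B"
    using inj B(1) by (meson card_image inj_on_subset)
  have "span X \<subseteq> span (T ` B)"
  proof
    fix w assume w: "w \<in> span X"
    show "w \<in> span (T ` B)"
    proof (rule ccontr)
      assume w_out: "w \<notin> span (T ` B)"
      then have "independent (insert w (T ` B))"
        using indep_TB independent_insertI by blast
      moreover have "insert w (T ` B) \<subseteq> span B"
        using w span_B into B(1) span_superset by fastforce
      ultimately have "card (insert w (T ` B)) \<le> card B"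
        using independent_span_bound[OF fin_B] by auto
      moreover have "card (insert w (T ` B)) = Suc (card B)"
        using w_out span_base[of w "T ` B"] fin_B card_TB by (metis card_insert_disjoint finite_imageI)
      ultimately show False
        by simp
    qed
  qed
  then show ?thesis
    using into span_B linear_span_image[OF lin, of B] by simp
qed

lemma bij_betw_inverse_into:
  assumes "bij_betw A V V" "x \<in> V"
  shows "the_inv_into V A x \<in> V" and "A (the_inv_into V A x) = x"
  using assms by (auto simp: bij_betw_def the_inv_into_into f_the_inv_into_f)

lemma inverse_additive_on:
  assumes "subspace V" "linear A" "bij_betw A V V" "x \<in> V" "y \<in> V"
  shows "the_inv_into V A (x + y) = the_inv_into V A x + the_inv_into V A y"
  using assms
  by (intro the_inv_into_f_eq bij_betw_imp_inj_on)
     (simp_all add: linear_add subspace_add bij_betw_inverse_into)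

lemma inverse_scaleR_on:
  assumes "subspace V" "linear A" "bij_betw A V V" "x \<in> V"
  shows "the_inv_into V A (r *\<^sub>R x) = r *\<^sub>R the_inv_into V A x"
  using assms
  by (intro the_inv_into_f_eq bij_betw_imp_inj_on)
     (simp_all add: linear_scale subspace_scale bij_betw_inverse_into)

lemma linear_idempotent_shift_inverse:
  fixes P :: "'v::real_vector \<Rightarrow> 'v"
  assumes P: "linear P" "\<And>w. P (P w) = P w" and B: "B \<noteq> 0" "B + c \<noteq> 0"
  defines "E \<equiv> \<lambda>w. B *\<^sub>R w + c *\<^sub>R P w"
    and "D \<equiv> \<lambda>w. (1 / B) *\<^sub>R (w - P w) + (1 / (B + c)) *\<^sub>R P w"
  shows "linear E" and "linear D" and "E (D w) = w" and "D (E w) = w"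
    and "B\<^sup>2 *\<^sub>R D w = B *\<^sub>R w - (B * c / (B + c)) *\<^sub>R P w"
proof -
  have P_D: "P (D w) = (1 / (B + c)) *\<^sub>R P w" for w
    using P(2) by (simp add: D_def linear_add[OF P(1)] linear_diff[OF P(1)] linear_scale[OF P(1)])
  show "linear E" "linear D"
    unfolding E_def D_def using P
    by (auto intro!: linear_compose_add linear_compose_scale_right linear_compose_sub linear_id[unfolded id_def])
  show "E (D w) = w"
  proof -
    have "E (D w) = B *\<^sub>R D w + c *\<^sub>R P (D w)"
      by (simp add: E_def)
    also have "\<dots> = (w - P w) + (B / (B + c) + c / (B + c)) *\<^sub>R P w"
      using B by (simp only: P_D) (simp add: D_def algebra_simps)
    also have "B / (B + c) + c / (B + c) = 1"
      using B by (simp add: add_divide_distrib[symmetric])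
    finally show ?thesis by simp
  qed
  show "D (E w) = w"
  proof -
    have P_E: "P (E w) = (B + c) *\<^sub>R P w"
      using P(2) by (simp add: E_def linear_add[OF P(1)] linear_scale[OF P(1)] algebra_simps)
    have "E w - P (E w) = B *\<^sub>R (w - P w)"
      unfolding P_E by (simp add: E_def algebra_simps)
    then show ?thesis
      using B by (simp add: D_def P_E)
  qed
  show "B\<^sup>2 *\<^sub>R D w = B *\<^sub>R w - (B * c / (B + c)) *\<^sub>R P w"
  proof -
    have "B\<^sup>2 *\<^sub>R D w = (B\<^sup>2 / B) *\<^sub>R w + (B\<^sup>2 / (B + c) - B\<^sup>2 / B) *\<^sub>R P w"
      by (simp add: D_def algebra_simps)
    also have "B\<^sup>2 / (B + c) - B\<^sup>2 / B = - (B * c / (B + c))"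
      using B by (simp add: field_simps power2_eq_square)
    finally show ?thesis
      using B by (simp add: power2_eq_square)
  qed
qed

lemma sum_fun_apply: "(\<Sum>x\<in>S. F x) z = (\<Sum>x\<in>S. F x z :: real)"
  by (induct S rule: infinite_finite_induct) auto

section \<open>A Woodbury identity\<close>

locale woodbury =
  fixes V W :: "'v::real_vector set" and A A' U R D E S :: "'v \<Rightarrow> 'v"
  assumes subspace_V: "subspace V" and subspace_W: "subspace W"
    and linear_A: "linear A" and linear_A': "linear A'"
    and linear_U: "linear U" and linear_R: "linear R"
    and linear_D: "linear D" and linear_E: "linear E"
    and bij_A: "bij_betw A V V" and bij_A': "bij_betw A' V V"
    and U_W: "w \<in> W \<Longrightarrow> U w \<in> V" and R_V: "x \<in> V \<Longrightarrow> R x \<in> W"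
    and D_W: "w \<in> W \<Longrightarrow> D w \<in> W" and E_W: "w \<in> W \<Longrightarrow> E w \<in> W"
    and E_D: "w \<in> W \<Longrightarrow> E (D w) = w" and D_E: "w \<in> W \<Longrightarrow> D (E w) = w"
    and A'_eq: "x \<in> V \<Longrightarrow> A' x = A x - U (D (R x))"
    and S_eq: "w \<in> W \<Longrightarrow> S w = E w - R (the_inv_into V A (U w))"
begin

abbreviation "G \<equiv> the_inv_into V A"
abbreviation "G' \<equiv> the_inv_into V A'"

lemmas G_V [simp] = bij_betw_inverse_into(1)[OF bij_A]
  and A_G [simp] = bij_betw_inverse_into(2)[OF bij_A]
  and G'_V [simp] = bij_betw_inverse_into(1)[OF bij_A']
  and A'_G' [simp] = bij_betw_inverse_into(2)[OF bij_A']
  and G_A [simp] = the_inv_into_f_f[OF bij_betw_imp_inj_on[OF bij_A]]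
  and G'_A' [simp] = the_inv_into_f_f[OF bij_betw_imp_inj_on[OF bij_A']]

lemma G_add [simp]: "x \<in> V \<Longrightarrow> y \<in> V \<Longrightarrow> G (x + y) = G x + G y"
  and G'_add [simp]: "x \<in> V \<Longrightarrow> y \<in> V \<Longrightarrow> G' (x + y) = G' x + G' y"
  using inverse_additive_on subspace_V linear_A bij_A linear_A' bij_A' by blast+

lemma G_diff [simp]: "x \<in> V \<Longrightarrow> y \<in> V \<Longrightarrow> G (x - y) = G x - G y"
  and G'_diff [simp]: "x \<in> V \<Longrightarrow> y \<in> V \<Longrightarrow> G' (x - y) = G' x - G' y"
  using G_add[of "x - y" y] G'_add[of "x - y" y] subspace_diff[OF subspace_V, of x y]
  by (simp_all add: eq_diff_eq)

lemmas mem_simps [simp] = U_W R_V D_W E_W subspace_add[OF subspace_V] subspace_diff[OF subspace_V]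
  subspace_add[OF subspace_W] subspace_diff[OF subspace_W]
lemmas linear_simps [simp] = linear_add[OF linear_U] linear_diff[OF linear_U]
  linear_add[OF linear_R] linear_diff[OF linear_R] linear_add[OF linear_D] linear_diff[OF linear_D]
  linear_add[OF linear_E] linear_diff[OF linear_E]

lemma G'_via_G: "x \<in> V \<Longrightarrow> G' x = G x + G (U (D (R (G' x))))"
proof -
  assume x: "x \<in> V"
  have "A (G' x) = x + U (D (R (G' x)))"
    using A'_eq[of "G' x"] x by (simp add: algebra_simps)
  then show ?thesis
    using x by (metis G_A G_add G'_V mem_simps(1-3))
qed

lemma G'_via_G': "x \<in> V \<Longrightarrow> G' x = G x + G' (U (D (R (G x))))"
proof -
  assume x: "x \<in> V"
  have "A' (G x) = x - U (D (R (G x)))"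
    using A'_eq[of "G x"] x by simp
  then have "G x = G' x - G' (U (D (R (G x))))"
    using x by (metis G'_A' G'_diff G_V mem_simps(1-3))
  then show ?thesis by (simp add: algebra_simps)
qed

(* The dual Woodbury formula: the inverse of S is D + D R A'^-1 U D. *)
definition C :: "'v \<Rightarrow> 'v" where
  "C w = D w + D (R (G' (U (D w))))"

lemma C_W [simp]: "w \<in> W \<Longrightarrow> C w \<in> W"
  by (simp add: C_def)

lemma S_W [simp]: "w \<in> W \<Longrightarrow> S w \<in> W"
  by (simp add: S_eq)

lemma S_C: "w \<in> W \<Longrightarrow> S (C w) = w"
proof -
  assume w: "w \<in> W"
  define u where "u = U (D w)"
  have u: "u \<in> V" using w by (simp add: u_def)
  have "S (C w) = w + R (G' u - G u - G (U (D (R (G' u)))))"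
    using w u by (simp add: S_eq C_def E_D u_def algebra_simps)
  also have "G' u - G u - G (U (D (R (G' u)))) = 0"
    using G'_via_G[OF u] by (metis add_diff_cancel_left' diff_self)
  finally show ?thesis by (simp add: linear_0[OF linear_R])
qed

lemma C_S: "w \<in> W \<Longrightarrow> C (S w) = w"
proof -
  assume w: "w \<in> W"
  define u where "u = U w"
  have u: "u \<in> V" using w by (simp add: u_def)
  have DS: "D (S w) = w - D (R (G u))"
    using w by (simp add: S_eq D_E u_def)
  have "C (S w) = w + D (R (G' u - G' (U (D (R (G u)))) - G u))"
    using w u by (simp add: C_def DS u_def algebra_simps)
  also have "G' u - G' (U (D (R (G u)))) - G u = 0"
    using G'_via_G'[OF u] by (metis add_diff_cancel_right' diff_self)
  finally show ?thesis by (simp add: linear_0[OF linear_R] linear_0[OF linear_D])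
qed

lemma bij_S: "bij_betw S W W"
  by (rule bij_betwI[of _ _ _ C]) (simp_all add: S_C C_S)

lemma woodbury_identity: "x \<in> V \<Longrightarrow> G' x = G x + G (U (the_inv_into W S (R (G x))))"
proof -
  assume x: "x \<in> V"
  have "the_inv_into W S (R (G x)) = C (R (G x))"
    using x by (intro the_inv_into_f_eq bij_betw_imp_inj_on[OF bij_S]) (simp_all add: S_C)
  also have "\<dots> = D (R (G x + G' (U (D (R (G x))))))"
    using x by (simp add: C_def)
  also have "\<dots> = D (R (G' x))"
    using G'_via_G'[OF x] by simp
  finally show ?thesis
    using G'_via_G[OF x] by simp
qed

end

lemma sp_subspace: "subspace (sp S)"
  by (auto simp: subspace_def sp_def)

lemma sp_eq_span:
  fixes S :: "(real^'d::finite) set"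
  assumes "finite S"
  shows "sp S = span ((\<lambda>x z. if z = x then 1 else 0 :: real) ` S)"
proof
  show "span ((\<lambda>x z. if z = x then 1 else 0 :: real) ` S) \<subseteq> sp S"
    by (rule span_minimal[OF _ sp_subspace]) (auto simp: sp_def)
  show "sp S \<subseteq> span ((\<lambda>x z. if z = x then 1 else 0 :: real) ` S)"
  proof
    fix f assume f: "f \<in> sp S"
    have "f = (\<Sum>x\<in>S. f x *\<^sub>R (\<lambda>z. if z = x then 1 else 0 :: real))"
    proof
      fix z
      have "(\<Sum>x\<in>S. f x *\<^sub>R (\<lambda>z. if z = x then 1 else 0 :: real)) z = (\<Sum>x\<in>S. if z = x then f x else 0)"
        by (simp add: sum_fun_apply if_distrib cong: if_cong)
      also have "\<dots> = f z"
        using assms f by (simp add: sum.delta sp_def)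
      finally show "f z = (\<Sum>x\<in>S. f x *\<^sub>R (\<lambda>z. if z = x then 1 else 0 :: real)) z" by simp
    qed
    also have "\<dots> \<in> span ((\<lambda>x z. if z = x then 1 else 0 :: real) ` S)"
      by (intro span_sum span_scale span_base) auto
    finally show "f \<in> span ((\<lambda>x z. if z = x then 1 else 0 :: real) ` S)" .
  qed
qed

lemma bij_betw_sp_if_linear_injective:
  fixes A :: "'d::finite fn \<Rightarrow> 'd fn"
  assumes "finite S" and "linear A" and "\<And>f. A f \<in> sp S"
    and kernel: "\<And>f. f \<in> sp S \<Longrightarrow> A f = 0 \<Longrightarrow> f = 0"
  shows "bij_betw A (sp S) (sp S)"
proof -
  obtain X where "finite X" and X: "sp S = span X"
    using sp_eq_span[OF \<open>finite S\<close>] \<open>finite S\<close> by blast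
  have inj: "inj_on A (sp S)"
  proof (rule inj_onI)
    fix f g assume "f \<in> sp S" "g \<in> sp S" "A f = A g"
    then have "f - g \<in> sp S" and "A (f - g) = 0"
      using subspace_diff[OF sp_subspace] linear_diff[OF \<open>linear A\<close>] by auto
    then show "f = g"
      using kernel by fastforce
  qed
  then have "A ` sp S = sp S"
    unfolding X using linear_inj_on_span_imp_surj[OF \<open>finite X\<close> \<open>linear A\<close>] assms(3) X by blast
  with inj show ?thesis
    by (simp add: bij_betw_def)
qed

lemma telescoping_sum:
  fixes F T :: "nat \<Rightarrow> 'a::comm_monoid_add"
  assumes "\<And>j. 1 \<le> j \<Longrightarrow> j < i \<Longrightarrow> F (Suc j) = T j + F j" and "1 \<le> i"
  shows "F i = (\<Sum>j=1..<i. T j) + F 1"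
  using assms
proof (induction i)
  case (Suc i)
  then show ?case
    by (cases "i = 0") (simp_all add: add_ac)
qed simp

section \<open>The block lattice\<close>

lemma round_down_eq_iff:
  fixes n p s :: nat
  assumes "0 < p" and "p dvd s"
  shows "n div p * p = s \<longleftrightarrow> s \<le> n \<and> n < s + p"
proof
  assume "n div p * p = s"
  moreover have "n < n div p * p + p"
    using mod_less_divisor[OF \<open>0 < p\<close>, of n] div_mult_mod_eq[of n p] by linarith
  ultimately show "s \<le> n \<and> n < s + p"
    using div_times_less_eq_dividend[of n p] by simp
next
  assume bounds: "s \<le> n \<and> n < s + p"
  obtain q where "s = p * q" using \<open>p dvd s\<close> ..
  with bounds have "n div p = q"
    by (intro div_nat_eqI) simp_all
  with \<open>s = p * q\<close> show "n div p * p = s" by simp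
qed

lemma dvd_add_le:
  fixes p s N :: nat
  shows "0 < p \<Longrightarrow> p dvd s \<Longrightarrow> p dvd N \<Longrightarrow> s < N \<Longrightarrow> s + p \<le> N"
  by (metis add_less_cancel_left dvd_add_right_iff less_imp_add_positive
    linorder_le_less_linear nat_dvd_not_less)

definition lattice_index :: "nat \<Rightarrow> nat \<Rightarrow> real^'d::finite \<Rightarrow> 'd \<Rightarrow> nat" where
  "lattice_index L k x \<mu> = nat \<lfloor>x$\<mu> / eta L k\<rfloor>"

(* The point y of \<Omega>_j with x \<in> B_j(y): every coordinate index of x rounded down to a multiple of L^j. *)
definition block_corner :: "nat \<Rightarrow> nat \<Rightarrow> nat \<Rightarrow> real^'d::finite \<Rightarrow> real^'d" where
  "block_corner L k j x = (\<chi> \<mu>. eta L k * real (lattice_index L k x \<mu> div L^j * L^j))"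

locale block_lattice =
  fixes L k m :: nat
  assumes L_gt_1: "L > 1"
begin

abbreviation "\<eta> \<equiv> eta L k"

lemma eta_pos: "\<eta> > 0"
  using L_gt_1 by (simp add: eta_def)

lemma lattice_index_eq: "x$\<mu> = \<eta> * real t \<Longrightarrow> lattice_index L k x \<mu> = t"
  using eta_pos by (simp add: lattice_index_def)

lemma mem_Omega_iff: "x \<in> Omega L k m \<longleftrightarrow> (\<forall>\<mu>. \<exists>n. n < L^m \<and> x$\<mu> = \<eta> * real n)"
  by (simp add: Omega_def Lat_def)

lemma Omega_index:
  "x \<in> Omega L k m \<Longrightarrow> x$\<mu> = \<eta> * real (lattice_index L k x \<mu>) \<and> lattice_index L k x \<mu> < L^m"
  using lattice_index_eq by (metis mem_Omega_iff)

lemma mem_OmegaJ_iff: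
  assumes "j \<le> m"
  shows "x \<in> OmegaJ L k m j \<longleftrightarrow> (\<forall>\<mu>. \<exists>n. n < L^m \<and> L^j dvd n \<and> x$\<mu> = \<eta> * real n)"
proof -
  have Lm: "L^m = L^j * L^(m-j)"
    using assms by (simp flip: power_add)
  have "(\<exists>s. s < L^(m-j) \<and> r = real L ^ j * \<eta> * real s) \<longleftrightarrow>
        (\<exists>n. n < L^m \<and> L^j dvd n \<and> r = \<eta> * real n)" for r
  proof
    assume "\<exists>s. s < L^(m-j) \<and> r = real L ^ j * \<eta> * real s"
    then obtain s where "s < L^(m-j)" "r = real L ^ j * \<eta> * real s" by blast
    with Lm L_gt_1 show "\<exists>n. n < L^m \<and> L^j dvd n \<and> r = \<eta> * real n"
      by (intro exI[of _ "L^j * s"]) simp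
  next
    assume "\<exists>n. n < L^m \<and> L^j dvd n \<and> r = \<eta> * real n"
    then obtain s where "L^j * s < L^m" "r = \<eta> * real (L^j * s)"
      by (auto elim: dvdE)
    with Lm L_gt_1 show "\<exists>s. s < L^(m-j) \<and> r = real L ^ j * \<eta> * real s"
      by (intro exI[of _ s]) simp
  qed
  then show ?thesis by (simp add: OmegaJ_def Lat_def)
qed

lemma OmegaJ_index:
  "j \<le> m \<Longrightarrow> y \<in> OmegaJ L k m j \<Longrightarrow> y \<in> Omega L k m \<and> L^j dvd lattice_index L k y \<mu>"
  using lattice_index_eq by (metis mem_OmegaJ_iff mem_Omega_iff)

lemma OmegaJ_subset: "j \<le> m \<Longrightarrow> OmegaJ L k m j \<subseteq> Omega L k m"
  using OmegaJ_index by blast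

lemma lattice_index_block_corner:
  "lattice_index L k (block_corner L k j x) \<mu> = lattice_index L k x \<mu> div L^j * L^j"
  by (rule lattice_index_eq) (simp add: block_corner_def)

lemma block_corner_OmegaJ:
  assumes "j \<le> m" and "x \<in> Omega L k m"
  shows "block_corner L k j x \<in> OmegaJ L k m j"
  unfolding mem_OmegaJ_iff[OF assms(1)]
proof
  fix \<mu>
  have "lattice_index L k x \<mu> div L^j * L^j < L^m"
    using Omega_index[OF assms(2), of \<mu>] div_times_less_eq_dividend order.strict_trans1 by blast
  then show "\<exists>n<L ^ m. L ^ j dvd n \<and> block_corner L k j x $ \<mu> = \<eta> * real n"
    by (auto simp: block_corner_def)
qed

lemma block_corner_idem:
  assumes "j \<le> m" and y: "y \<in> OmegaJ L k m j"
  shows "block_corner L k j y = y"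
proof -
  have "block_corner L k j y $ \<mu> = y $ \<mu>" for \<mu>
    using OmegaJ_index[OF assms] Omega_index[of y \<mu>] by (simp add: block_corner_def)
  then show ?thesis by (simp add: vec_eq_iff)
qed

lemma mem_Bj_iff:
  assumes j: "j \<le> m" and y: "y \<in> OmegaJ L k m j"
  shows "x \<in> Bj L k j y \<longleftrightarrow> x \<in> Omega L k m \<and> block_corner L k j x = y"
proof -
  define p where "p = L^j"
  define s where "s = lattice_index L k y"
  have p: "0 < p" "p dvd L^m"
    using L_gt_1 j by (simp_all add: p_def le_imp_power_dvd)
  have y_coord: "y$\<mu> = \<eta> * real (s \<mu>)" "s \<mu> < L^m" "p dvd s \<mu>" for \<mu>
    using Omega_index OmegaJ_index[OF j y] p_def s_def by blast+
  have s_p: "s \<mu> + p \<le> L^m" for \<mu>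
    using dvd_add_le[OF p(1) y_coord(3) p(2) y_coord(2)] .
  have in_block: "y$\<mu> \<le> \<eta> * r \<and> \<eta> * r < y$\<mu> + real L ^ j * \<eta> \<longleftrightarrow> real (s \<mu>) \<le> r \<and> r < real (s \<mu> + p)"
    for \<mu> r
  proof -
    have "y$\<mu> + real L ^ j * \<eta> = \<eta> * real (s \<mu> + p)"
      by (simp add: y_coord(1) p_def algebra_simps)
    then show ?thesis
      using eta_pos by (simp add: y_coord(1))
  qed
  have coord: "(\<exists>z::int. r = \<eta> * of_int z) \<and> y$\<mu> \<le> r \<and> r < y$\<mu> + real L ^ j * \<eta>
      \<longleftrightarrow> (\<exists>n. n < L^m \<and> r = \<eta> * real n \<and> n div p * p = s \<mu>)" for r \<mu>
  proof
    assume "(\<exists>z::int. r = \<eta> * of_int z) \<and> y$\<mu> \<le> r \<and> r < y$\<mu> + real L ^ j * \<eta>"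
    then obtain z :: int where z: "r = \<eta> * of_int z" "real (s \<mu>) \<le> of_int z" "of_int z < real (s \<mu> + p)"
      using in_block by blast
    then have "int (s \<mu>) \<le> z" "z < int (s \<mu> + p)"
      by (metis of_int_le_iff of_int_of_nat_eq, metis of_int_less_iff of_int_of_nat_eq)
    then have "r = \<eta> * real (nat z)" "s \<mu> \<le> nat z" "nat z < s \<mu> + p"
      using z(1) by auto
    then show "\<exists>n. n < L^m \<and> r = \<eta> * real n \<and> n div p * p = s \<mu>"
      using round_down_eq_iff[OF p(1) y_coord(3)] s_p[of \<mu>] by (intro exI[of _ "nat z"]) auto
  next
    assume "\<exists>n. n < L^m \<and> r = \<eta> * real n \<and> n div p * p = s \<mu>"
    then obtain n where n: "r = \<eta> * real n" "s \<mu> \<le> n" "n < s \<mu> + p"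
      using round_down_eq_iff[OF p(1) y_coord(3)] by blast
    then have "r = \<eta> * of_int (int n)" "y$\<mu> \<le> r \<and> r < y$\<mu> + real L ^ j * \<eta>"
      using in_block[of \<mu> "real n"] by simp_all
    then show "(\<exists>z::int. r = \<eta> * of_int z) \<and> y$\<mu> \<le> r \<and> r < y$\<mu> + real L ^ j * \<eta>"
      by blast
  qed
  have "x \<in> Bj L k j y \<longleftrightarrow> (\<forall>\<mu>. \<exists>n. n < L^m \<and> x$\<mu> = \<eta> * real n \<and> n div p * p = s \<mu>)"
    unfolding Bj_def coord[symmetric] by blast
  also have "\<dots> \<longleftrightarrow> x \<in> Omega L k m \<and> block_corner L k j x = y"
  proof
    assume H: "\<forall>\<mu>. \<exists>n. n < L^m \<and> x$\<mu> = \<eta> * real n \<and> n div p * p = s \<mu>"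
    then have "lattice_index L k x \<mu> div p * p = s \<mu>" for \<mu>
      using lattice_index_eq by metis
    then have "block_corner L k j x $ \<mu> = y $ \<mu>" for \<mu>
      by (simp add: block_corner_def y_coord(1) flip: p_def)
    with H show "x \<in> Omega L k m \<and> block_corner L k j x = y"
      unfolding mem_Omega_iff vec_eq_iff by blast
  next
    assume x: "x \<in> Omega L k m \<and> block_corner L k j x = y"
    have "\<eta> * real (lattice_index L k x \<mu> div p * p) = \<eta> * real (s \<mu>)" for \<mu>
      using x y_coord(1)[of \<mu>] by (auto simp: block_corner_def vec_eq_iff p_def)
    then show "\<forall>\<mu>. \<exists>n. n < L^m \<and> x$\<mu> = \<eta> * real n \<and> n div p * p = s \<mu>"
      using x Omega_index eta_pos by (metis mult_cancel_left less_irrefl of_nat_eq_iff)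
  qed
  finally show ?thesis .
qed

lemma Bj_eq_fibre:
  "j \<le> m \<Longrightarrow> y \<in> OmegaJ L k m j \<Longrightarrow> Bj L k j y = {x \<in> Omega L k m. block_corner L k j x = y}"
  using mem_Bj_iff by blast

lemma the_block_corner:
  "j \<le> m \<Longrightarrow> x \<in> Omega L k m \<Longrightarrow> (THE y. y \<in> OmegaJ L k m j \<and> x \<in> Bj L k j y) = block_corner L k j x"
  by (rule the_equality) (auto simp: mem_Bj_iff block_corner_OmegaJ)

lemma block_corner_Suc:
  "block_corner L k (Suc j) (block_corner L k j x) = block_corner L k (Suc j) x"
proof -
  have "n div L^j * L^j div L^Suc j = n div L^Suc j" for n
    using L_gt_1 by (simp add: power_Suc2 div_mult2_eq[symmetric, of _ "L^j"] mult.commute)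
  then show ?thesis
    by (simp add: vec_eq_iff block_corner_def[of L k "Suc j"] lattice_index_block_corner)
qed

lemma finite_Omega: "finite (Omega L k m :: (real^'d::finite) set)"
proof -
  have "Omega L k m \<subseteq> (\<lambda>n. \<chi> \<mu>. \<eta> * real (n \<mu>)) ` (PiE (UNIV::'d set) (\<lambda>_. {..<L^m}))"
  proof
    fix x :: "real^'d" assume x: "x \<in> Omega L k m"
    have "x = (\<chi> \<mu>. \<eta> * real (lattice_index L k x \<mu>))"
      using Omega_index[OF x] by (simp add: vec_eq_iff)
    moreover have "lattice_index L k x \<in> PiE UNIV (\<lambda>_. {..<L^m})"
      using Omega_index[OF x] by auto
    ultimately show "x \<in> (\<lambda>n. \<chi> \<mu>. \<eta> * real (n \<mu>)) ` (PiE UNIV (\<lambda>_. {..<L^m}))"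
      by blast
  qed
  then show ?thesis
    by (rule finite_subset) (simp add: finite_PiE)
qed

lemma finite_OmegaJ: "j \<le> m \<Longrightarrow> finite (OmegaJ L k m j :: (real^'d::finite) set)"
  using finite_Omega OmegaJ_subset finite_subset by blast

lemma block_children_eq_image:
  fixes z :: "real^'d::finite"
  assumes j: "Suc j \<le> m" and z: "z \<in> OmegaJ L k m (Suc j)"
  shows "{y \<in> OmegaJ L k m j. block_corner L k (Suc j) y = z}
    = (\<lambda>t. \<chi> \<mu>. \<eta> * real (lattice_index L k z \<mu> + L^j * t \<mu>)) ` PiE UNIV (\<lambda>_. {..<L})"
    (is "?children = ?child ` ?T")
proof -
  define p where "p = L^j"
  define q where "q = L^Suc j"
  define s where "s = lattice_index L k z"
  have p: "0 < p" and q: "0 < q" and q_p: "q = p * L"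
    using L_gt_1 by (simp_all add: p_def q_def)
  have "q dvd L^m"
    unfolding q_def using j by (rule le_imp_power_dvd)
  have z_coord: "z$\<mu> = \<eta> * real (s \<mu>)" "s \<mu> < L^m" "q dvd s \<mu>" for \<mu>
    using Omega_index OmegaJ_index[OF j z] s_def q_def by blast+
  have p_s: "p dvd s \<mu>" for \<mu>
    using z_coord(3) q_p dvd_mult_left by blast
  have "s \<mu> + q \<le> L^m" for \<mu>
    using dvd_add_le[OF q z_coord(3) \<open>q dvd L^m\<close> z_coord(2)] .
  then have child_index: "(n < L^m \<and> p dvd n \<and> n div q * q = s \<mu>) \<longleftrightarrow> (\<exists>t<L. n = s \<mu> + p * t)"
    for n \<mu>
  proof (intro iffI)
    assume n: "n < L^m \<and> p dvd n \<and> n div q * q = s \<mu>"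
    then have "s \<mu> \<le> n" "n < s \<mu> + q"
      using round_down_eq_iff[OF q z_coord(3)] by blast+
    moreover obtain t where "n - s \<mu> = p * t"
      using n p_s[of \<mu>] dvd_diff_nat by blast
    ultimately have "p * t < p * L" "n = s \<mu> + p * t"
      using q_p by linarith+
    then show "\<exists>t<L. n = s \<mu> + p * t"
      by (intro exI[of _ t]) (simp add: mult_less_cancel1)
  next
    assume "\<exists>t<L. n = s \<mu> + p * t"
    then obtain t where t: "t < L" "n = s \<mu> + p * t" by blast
    then have "p * t < q"
      using q_p p by simp
    then show "n < L^m \<and> p dvd n \<and> n div q * q = s \<mu>"
      using t round_down_eq_iff[OF q z_coord(3)] p_s[of \<mu>] \<open>s \<mu> + q \<le> L^m\<close> by auto
  qed
  show ?thesis
  proof (intro set_eqI iffI)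
    fix y assume "y \<in> ?children"
    then have y: "y \<in> Omega L k m" "p dvd lattice_index L k y \<mu>"
      "lattice_index L k y \<mu> div q * q = s \<mu>" for \<mu>
      using OmegaJ_index[of j y] j lattice_index_block_corner[of "Suc j" y] p_def q_def s_def by auto
    then have "\<forall>\<mu>. \<exists>t. t < L \<and> lattice_index L k y \<mu> = s \<mu> + p * t"
      using child_index Omega_index by blast
    from choice[OF this] obtain t where t: "\<forall>\<mu>. t \<mu> < L \<and> lattice_index L k y \<mu> = s \<mu> + p * t \<mu>"
      by blast
    have "y = ?child t"
      using Omega_index[OF y(1)] t by (simp add: vec_eq_iff s_def p_def)
    moreover have "t \<in> ?T"
      using t by (simp add: PiE_UNIV_domain)
    ultimately show "y \<in> ?child ` ?T"
      by blast
  next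
    fix y assume "y \<in> ?child ` ?T"
    then obtain t where "t \<in> ?T" and y: "y = ?child t" by blast
    then have t: "t \<mu> < L" for \<mu>
      by (auto simp: PiE_UNIV_domain)
    have index_y: "lattice_index L k y \<mu> = s \<mu> + p * t \<mu>" for \<mu>
      by (rule lattice_index_eq) (simp add: y s_def p_def)
    have n: "s \<mu> + p * t \<mu> < L^m" "p dvd s \<mu> + p * t \<mu>" "(s \<mu> + p * t \<mu>) div q * q = s \<mu>" for \<mu>
      using child_index[of "s \<mu> + p * t \<mu>" \<mu>] t[of \<mu>] by blast+
    have "y \<in> OmegaJ L k m j"
      unfolding mem_OmegaJ_iff[OF Suc_leD[OF j]]
    proof
      fix \<mu>
      show "\<exists>n<L^m. L^j dvd n \<and> y$\<mu> = \<eta> * real n"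
        using n(1,2) by (intro exI[of _ "s \<mu> + p * t \<mu>"]) (simp add: y s_def p_def)
    qed
    moreover have "block_corner L k (Suc j) y $ \<mu> = z $ \<mu>" for \<mu>
    proof -
      have "block_corner L k (Suc j) y $ \<mu> = \<eta> * real (lattice_index L k y \<mu> div q * q)"
        by (simp add: block_corner_def q_def)
      then show ?thesis
        using n(3)[of \<mu>] z_coord(1)[of \<mu>] by (simp add: index_y)
    qed
    ultimately show "y \<in> ?children"
      by (simp add: vec_eq_iff)
  qed
qed

lemma card_block_children:
  fixes z :: "real^'d::finite"
  assumes "Suc j \<le> m" and "z \<in> OmegaJ L k m (Suc j)"
  shows "card {y \<in> OmegaJ L k m j. block_corner L k (Suc j) y = z} = L ^ CARD('d)"
proof -
  have "inj_on (\<lambda>t. \<chi> \<mu>. \<eta> * real (lattice_index L k z \<mu> + L^j * t \<mu>)) (PiE UNIV (\<lambda>_. {..<L}))"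
  proof (rule inj_onI)
    fix t t' :: "'d \<Rightarrow> nat"
    assume eq: "(\<chi> \<mu>. \<eta> * real (lattice_index L k z \<mu> + L^j * t \<mu>)) = (\<chi> \<mu>. \<eta> * real (lattice_index L k z \<mu> + L^j * t' \<mu>))"
    have "\<eta> * real (lattice_index L k z \<mu> + L^j * t \<mu>) = \<eta> * real (lattice_index L k z \<mu> + L^j * t' \<mu>)" for \<mu>
      using arg_cong[OF eq, of "\<lambda>v. v $ \<mu>"] by simp
    then have "t \<mu> = t' \<mu>" for \<mu>
      using eta_pos L_gt_1 by (simp only: mult_cancel_left of_nat_eq_iff) simp
    then show "t = t'" ..
  qed
  then show ?thesis
    by (simp add: block_children_eq_image[OF assms] card_image card_PiE)
qed

lemma lattice_index_minus_axis:
  assumes x: "x \<in> Omega L k m" and pos: "0 < lattice_index L k x \<mu>"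
  defines "z \<equiv> x - \<eta> *\<^sub>R axis \<mu> 1"
  shows "lattice_index L k z \<nu> = (if \<nu> = \<mu> then lattice_index L k x \<mu> - 1 else lattice_index L k x \<nu>)"
    and "z \<in> Omega L k m"
proof -
  have coord: "z $ \<nu> = \<eta> * real (if \<nu> = \<mu> then lattice_index L k x \<mu> - 1 else lattice_index L k x \<nu>)" for \<nu>
    using Omega_index[OF x] pos by (auto simp: z_def axis_def of_nat_diff algebra_simps)
  show "lattice_index L k z \<nu> = (if \<nu> = \<mu> then lattice_index L k x \<mu> - 1 else lattice_index L k x \<nu>)"
    using lattice_index_eq[OF coord] .
  show "z \<in> Omega L k m"
    unfolding mem_Omega_iff
  proof
    fix \<nu>
    show "\<exists>n<L^m. z $ \<nu> = \<eta> * real n"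
      using coord[of \<nu>] Omega_index[OF x] by (metis less_imp_diff_less)
  qed
qed

(* Induction on the distance \<Sum>\<mu>. index mod L^j to the corner: one lattice step towards the corner
   stays in the block. *)
lemma block_corner_invariant:
  assumes edge: "\<And>z \<mu>. z \<in> Omega L k m \<Longrightarrow> z + \<eta> *\<^sub>R axis \<mu> 1 \<in> Omega L k m \<Longrightarrow>
      f (z + \<eta> *\<^sub>R axis \<mu> 1) = f z"
  shows "x \<in> Omega L k m \<Longrightarrow> f x = f (block_corner L k j (x :: real^'d::finite))"
proof (induction x rule: measure_induct_rule[where f = "\<lambda>x. \<Sum>\<mu>\<in>UNIV. lattice_index L k x \<mu> mod L^j"])
  case (less x)
  show ?case
  proof (cases "\<forall>\<mu>. lattice_index L k x \<mu> mod L^j = 0")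
    case True
    then have "block_corner L k j x = x"
      using Omega_index[OF less.prems] by (simp add: vec_eq_iff block_corner_def mod_eq_0_iff_dvd)
    then show ?thesis by simp
  next
    case False
    then obtain \<mu> where \<mu>: "lattice_index L k x \<mu> mod L^j \<noteq> 0" by blast
    then have "lattice_index L k x \<mu> \<noteq> 0"
      by (metis mod_0)
    then obtain n where n: "lattice_index L k x \<mu> = Suc n"
      using not0_implies_Suc by blast
    define z where "z = x - \<eta> *\<^sub>R axis \<mu> 1"
    have z: "z \<in> Omega L k m"
      and index_z: "\<And>\<nu>. lattice_index L k z \<nu> = (if \<nu> = \<mu> then n else lattice_index L k x \<nu>)"
      using lattice_index_minus_axis[OF less.prems, of \<mu>] n by (simp_all add: z_def)
    have n_mod: "Suc (n mod L^j) \<noteq> L^j"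
      using \<mu> n by (auto simp: mod_Suc split: if_splits)
    have "block_corner L k j z = block_corner L k j x"
      using \<mu> n n_mod eta_pos L_gt_1 by (simp add: vec_eq_iff block_corner_def index_z div_Suc)
    moreover have "(\<Sum>\<nu>\<in>UNIV. lattice_index L k z \<nu> mod L^j) < (\<Sum>\<nu>\<in>UNIV. lattice_index L k x \<nu> mod L^j)"
      by (rule sum_strict_mono_ex1) (use n n_mod in \<open>auto simp: index_z mod_Suc\<close>)
    moreover have "f x = f z"
      using edge[OF z, of \<mu>] less.prems by (simp add: z_def)
    ultimately show ?thesis
      using less.IH z by simp
  qed
qed

end

lemma nb_add: "nb S (f + g) x v = nb S f x v + nb S g x v"
  by (simp add: nb_def)
lemma nb_scale: "nb S (r *\<^sub>R f) x v = r * nb S f x v"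
  by (simp add: nb_def)

lemma linear_Lap: "linear (Lap L k m)"
proof (rule linearI)
  have split: "(\<Sum>\<mu>\<in>S. (a \<mu> + b \<mu>) - 2 * (p + q) + (c \<mu> + d \<mu>))
      = (\<Sum>\<mu>\<in>S. a \<mu> - 2 * p + c \<mu>) + (\<Sum>\<mu>\<in>S. b \<mu> - 2 * q + d \<mu>)"
    for S :: "'d set" and a b c d :: "'d \<Rightarrow> real" and p q :: real
    by (simp add: sum.distrib[symmetric] algebra_simps)
  show "Lap L k m (f + g) = Lap L k m f + Lap L k m g" for f g :: "'d::finite fn"
  proof
    fix x
    show "Lap L k m (f + g) x = (Lap L k m f + Lap L k m g) x"
      by (simp only: Lap_def plus_fun_apply nb_add split) (simp add: algebra_simps)
  qed
  show "Lap L k m (r *\<^sub>R f) = r *\<^sub>R Lap L k m f" for r f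
    unfolding Lap_def fun_eq_iff scaleR_fun_apply nb_scale
    by (simp add: sum_distrib_left algebra_simps)
qed

lemma linear_QO: "linear (QO L k m j)"
  by (rule linearI) (simp_all add: QO_def fun_eq_iff sum.distrib sum_distrib_left sum_divide_distrib algebra_simps)
lemma linear_QOadj: "linear (QOadj L k m j)"
  by (rule linearI) (simp_all add: QOadj_def fun_eq_iff)
lemma linear_Qstep: "linear (Qstep L k m j)"
  by (rule linearI) (simp_all add: Qstep_def fun_eq_iff sum.distrib sum_distrib_left sum_divide_distrib algebra_simps)
lemma linear_Qstepadj: "linear (Qstepadj L k m j)"
  by (rule linearI) (simp_all add: Qstepadj_def fun_eq_iff)

lemma linear_Aop: "linear (Aop L k m a mu0 j)"
  by (intro linearI)
    (simp_all add: Aop_def fun_eq_iff algebra_simps linear_add[OF linear_Lap] linear_scale[OF linear_Lap]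
      linear_add[OF linear_QO] linear_scale[OF linear_QO] linear_add[OF linear_QOadj] linear_scale[OF linear_QOadj])

lemma QO_sp[simp]: "QO L k m j f \<in> sp (OmegaJ L k m j)" by (simp add: sp_def QO_def)
lemma QOadj_sp[simp]: "QOadj L k m j f \<in> sp (Omega L k m)" by (simp add: sp_def QOadj_def)
lemma Qstep_sp[simp]: "Qstep L k m j f \<in> sp (OmegaJ L k m (Suc j))" by (simp add: sp_def Qstep_def)
lemma Qstepadj_sp[simp]: "Qstepadj L k m j f \<in> sp (OmegaJ L k m j)" by (simp add: sp_def Qstepadj_def)
lemma Aop_sp[simp]: "Aop L k m a mu0 j f \<in> sp (Omega L k m)" by (simp add: sp_def Aop_def)

lemma neumann_pair_sum:
  fixes S :: "(real^'d::finite) set" and f :: "real^'d \<Rightarrow> real"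
  assumes fin: "finite S"
  shows "(\<Sum>x\<in>S. f x * (2 * f x - nb S f x v - nb S f x (- v))) = (\<Sum>z\<in>{z\<in>S. z + v \<in> S}. (f (z + v) - f z)^2)"
proof -
  have s1: "(\<Sum>x\<in>S. f x * (f x - nb S f x v)) = (\<Sum>z\<in>{z\<in>S. z + v \<in> S}. f z * (f z - f (z + v)))"
    by (simp add: sum.inter_filter[OF fin] nb_def, rule sum.cong, auto)
  have s2: "(\<Sum>x\<in>S. f x * (f x - nb S f x (- v))) = (\<Sum>x\<in>{x\<in>S. x - v \<in> S}. f x * (f x - f (x - v)))"
    by (simp add: sum.inter_filter[OF fin] nb_def, rule sum.cong, auto)
  have img: "(\<lambda>z. z + v) ` {z\<in>S. z + v \<in> S} = {x\<in>S. x - v \<in> S}"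
  proof
    show "(\<lambda>z. z + v) ` {z\<in>S. z + v \<in> S} \<subseteq> {x\<in>S. x - v \<in> S}" by auto
    show "{x\<in>S. x - v \<in> S} \<subseteq> (\<lambda>z. z + v) ` {z\<in>S. z + v \<in> S}"
    proof
      fix x assume "x \<in> {x\<in>S. x - v \<in> S}"
      then have "x - v \<in> {z\<in>S. z + v \<in> S}" "x = (x - v) + v" by auto
      then show "x \<in> (\<lambda>z. z + v) ` {z\<in>S. z + v \<in> S}" by blast
    qed
  qed
  have s3: "(\<Sum>x\<in>{x\<in>S. x - v \<in> S}. f x * (f x - f (x - v))) = (\<Sum>z\<in>{z\<in>S. z + v \<in> S}. f (z + v) * (f (z + v) - f z))"
  proof -
    have "inj_on (\<lambda>z. z + v) {z\<in>S. z + v \<in> S}" by (simp add: inj_on_def)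
    then have "(\<Sum>x\<in>(\<lambda>z. z + v) ` {z\<in>S. z + v \<in> S}. f x * (f x - f (x - v))) = (\<Sum>z\<in>{z\<in>S. z + v \<in> S}. f (z + v) * (f (z + v) - f (z + v - v)))"
      by (simp add: sum.reindex)
    then show ?thesis using img by simp
  qed
  have "(\<Sum>x\<in>S. f x * (2 * f x - nb S f x v - nb S f x (- v))) = (\<Sum>x\<in>S. f x * (f x - nb S f x v)) + (\<Sum>x\<in>S. f x * (f x - nb S f x (- v)))"
    by (simp add: sum.distrib[symmetric] algebra_simps)
  also have "\<dots> = (\<Sum>z\<in>{z\<in>S. z + v \<in> S}. f z * (f z - f (z + v)) + f (z + v) * (f (z + v) - f z))"
    by (simp add: s1 s2 s3 sum.distrib)
  also have "\<dots> = (\<Sum>z\<in>{z\<in>S. z + v \<in> S}. (f (z + v) - f z)^2)"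
    by (rule sum.cong) (simp_all add: power2_eq_square algebra_simps)
  finally show ?thesis .
qed

context block_lattice begin

lemma QOadj_eval:
  "j \<le> m \<Longrightarrow> x \<in> Omega L k m \<Longrightarrow> QOadj L k m j h x = h (block_corner L k j x)"
  by (simp add: QOadj_def the_block_corner)

lemma QO_eval:
  fixes y :: "real^'d::finite"
  assumes "j \<le> m" and "y \<in> OmegaJ L k m j"
  shows "QO L k m j f y
    = (1 / real L ^ (j * CARD('d))) * (\<Sum>x\<in>{x\<in>Omega L k m. block_corner L k j x = y}. f x)"
  using assms by (simp add: QO_def Bj_eq_fibre)

lemma Qstepadj_eval:
  assumes "Suc j \<le> m" and "y \<in> OmegaJ L k m j"
  shows "Qstepadj L k m j h y = h (block_corner L k (Suc j) y)"
proof -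
  have "y \<in> Omega L k m"
    using assms OmegaJ_subset[of j] by auto
  then show ?thesis
    using assms(2) by (simp add: Qstepadj_def the_block_corner[OF assms(1)])
qed

lemma Qstep_eval:
  fixes z :: "real^'d::finite"
  assumes "Suc j \<le> m" and "z \<in> OmegaJ L k m (Suc j)"
  shows "Qstep L k m j h z
    = (1 / real L ^ CARD('d)) * (\<Sum>y\<in>{y\<in>OmegaJ L k m j. block_corner L k (Suc j) y = z}. h y)"
proof -
  have "OmegaJ L k m j \<inter> Bj L k (Suc j) z = {y \<in> OmegaJ L k m j. block_corner L k (Suc j) y = z}"
    using Bj_eq_fibre[OF assms] OmegaJ_subset[of j] assms(1) by auto
  then show ?thesis
    using assms(2) by (simp add: Qstep_def)
qed

lemma Qstep_Qstepadj:
  assumes j: "Suc j \<le> m" and h: "h \<in> sp (OmegaJ L k m (Suc j) :: (real^'d::finite) set)"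
  shows "Qstep L k m j (Qstepadj L k m j h) = h"
proof
  fix z :: "real^'d"
  show "Qstep L k m j (Qstepadj L k m j h) z = h z"
  proof (cases "z \<in> OmegaJ L k m (Suc j)")
    case False
    then show ?thesis using h by (simp add: Qstep_def sp_def)
  next
    case True
    have "(\<Sum>y\<in>{y\<in>OmegaJ L k m j. block_corner L k (Suc j) y = z}. Qstepadj L k m j h y)
        = (\<Sum>y\<in>{y\<in>OmegaJ L k m j. block_corner L k (Suc j) y = z}. h z)"
      by (rule sum.cong) (use j in \<open>auto simp: Qstepadj_eval\<close>)
    also have "\<dots> = real (L ^ CARD('d)) * h z" using card_block_children[OF j True] by simp
    finally show ?thesis using True j L_gt_1 by (simp add: Qstep_eval)
  qed
qed

lemma QO_comp: assumes j: "Suc j \<le> m"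
  shows "QO L k m (Suc j) f = Qstep L k m j (QO L k m j (f :: real^'d::finite \<Rightarrow> real))"
proof
  fix z :: "real^'d"
  show "QO L k m (Suc j) f z = Qstep L k m j (QO L k m j f) z"
  proof (cases "z \<in> OmegaJ L k m (Suc j)")
    case False
    then show ?thesis by (simp add: Qstep_def QO_def)
  next
    case True
    have jm: "j \<le> m" using j by simp
    define S where "S = {x \<in> Omega L k m. block_corner L k (Suc j) x = z}"
    define T where "T = {y \<in> OmegaJ L k m j. block_corner L k (Suc j) y = z}"
    have fS: "finite S" unfolding S_def by (rule finite_subset[OF _ finite_Omega]) auto
    have fT: "finite T" unfolding T_def by (rule finite_subset[OF _ finite_OmegaJ[OF jm]]) auto
    have ST: "block_corner L k j ` S \<subseteq> T"
      using block_corner_OmegaJ[OF jm] unfolding S_def T_def by (auto simp: block_corner_Suc)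
    have grp: "(\<Sum>y\<in>T. \<Sum>x\<in>{x. x \<in> S \<and> block_corner L k j x = y}. f x) = (\<Sum>x\<in>S. f x)"
      by (rule sum.group[OF fS fT ST])
    have inner: "{x. x \<in> S \<and> block_corner L k j x = y} = {x \<in> Omega L k m. block_corner L k j x = y}"
      if "y \<in> T" for y
      using that unfolding S_def T_def by (auto simp: block_corner_Suc)
    have "Qstep L k m j (QO L k m j f) z
       = (1 / real L ^ CARD('d)) * (\<Sum>y\<in>T. (1 / real L ^ (j * CARD('d))) * (\<Sum>x\<in>{x\<in>Omega L k m. block_corner L k j x = y}. f x))"
      unfolding Qstep_eval[OF j True] T_def
      by (rule arg_cong[where f="\<lambda>t. _ * t"], rule sum.cong) (auto simp: QO_eval[OF jm])
    also have "\<dots> = (1 / real L ^ CARD('d)) * (1 / real L ^ (j * CARD('d))) * (\<Sum>y\<in>T. \<Sum>x\<in>{x. x \<in> S \<and> block_corner L k j x = y}. f x)"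
      by (simp add: sum_distrib_left inner)
    also have "\<dots> = (1 / real L ^ (Suc j * CARD('d))) * (\<Sum>x\<in>S. f x)"
      by (simp add: grp power_add)
    also have "\<dots> = QO L k m (Suc j) f z"
      using True j by (simp add: QO_eval S_def)
    finally show ?thesis ..
  qed
qed

lemma QOadj_comp: assumes j: "Suc j \<le> m"
  shows "QOadj L k m (Suc j) h = QOadj L k m j (Qstepadj L k m j (h :: real^'d::finite \<Rightarrow> real))"
proof
  fix x :: "real^'d"
  have jm: "j \<le> m" using j by simp
  show "QOadj L k m (Suc j) h x = QOadj L k m j (Qstepadj L k m j h) x"
  proof (cases "x \<in> Omega L k m")
    case False then show ?thesis by (simp add: QOadj_def)
  next
    case True
    then show ?thesis using j jm block_corner_OmegaJ[OF jm True]
      by (simp add: QOadj_eval Qstepadj_eval block_corner_Suc)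
  qed
qed

lemma Lap_quadratic_form:
  fixes f :: "real^'d::finite \<Rightarrow> real"
  shows "(\<Sum>x\<in>Omega L k m. f x * (- Lap L k m f x)) = (1/\<eta>^2) *
    (\<Sum>\<mu>\<in>UNIV. \<Sum>z\<in>{z\<in>Omega L k m. z + \<eta> *\<^sub>R axis \<mu> 1 \<in> Omega L k m}. (f (z + \<eta> *\<^sub>R axis \<mu> 1) - f z)^2)"
proof -
  let ?\<Omega> = "Omega L k m"
  let ?e = "\<lambda>\<mu>. \<eta> *\<^sub>R axis \<mu> 1"
  let ?pair = "\<lambda>x \<mu>. f x * (2 * f x - nb ?\<Omega> f x (?e \<mu>) - nb ?\<Omega> f x (- ?e \<mu>))"
  have pointwise: "f x * (- Lap L k m f x) = (1/\<eta>^2) * (\<Sum>\<mu>\<in>UNIV. ?pair x \<mu>)" if "x \<in> ?\<Omega>" for x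
  proof -
    have "(\<Sum>\<mu>\<in>UNIV. ?pair x \<mu>) = - (f x * (\<Sum>\<mu>\<in>UNIV. nb ?\<Omega> f x (?e \<mu>) - 2 * f x + nb ?\<Omega> f x (- ?e \<mu>)))"
      by (simp add: sum_distrib_left sum_negf[symmetric] algebra_simps)
    then show ?thesis
      using that by (simp add: Lap_def)
  qed
  have "(\<Sum>x\<in>?\<Omega>. f x * (- Lap L k m f x)) = (\<Sum>x\<in>?\<Omega>. (1/\<eta>^2) * (\<Sum>\<mu>\<in>UNIV. ?pair x \<mu>))"
    by (rule sum.cong[OF refl pointwise])
  also have "\<dots> = (1/\<eta>^2) * (\<Sum>x\<in>?\<Omega>. \<Sum>\<mu>\<in>UNIV. ?pair x \<mu>)"
    by (rule sum_distrib_left[symmetric])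
  also have "\<dots> = (1/\<eta>^2) * (\<Sum>\<mu>\<in>UNIV. \<Sum>x\<in>?\<Omega>. ?pair x \<mu>)"
    by (subst sum.swap) (rule refl)
  finally show ?thesis
    by (simp add: neumann_pair_sum[OF finite_Omega])
qed

end

section \<open>Invertibility of A_j\<close>

context block_lattice begin

lemma aj_pos: "1 \<le> j \<Longrightarrow> 0 < a \<Longrightarrow> 0 < aj a L j"
proof -
  assume j: "1 \<le> j" and a: "0 < a"
  have L2: "real L ^ 2 > 1" using L_gt_1 by simp
  have L2j: "real L ^ (2*j) > 1" using L_gt_1 j by simp
  have "1 / real L ^ 2 < 1" using L2 by (simp add: divide_less_eq)
  moreover have "1 / real L ^ (2*j) < 1" using L2j by (simp add: divide_less_eq)
  ultimately show ?thesis using a by (simp add: aj_def)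
qed

lemma sum_fibre_QO:
  fixes y :: "real^'d::finite"
  assumes "j \<le> m" and "y \<in> OmegaJ L k m j"
  shows "(\<Sum>x\<in>{x\<in>Omega L k m. block_corner L k j x = y}. f x) = real L ^ (j * CARD('d)) * QO L k m j f y"
  using assms L_gt_1 by (simp add: QO_eval)

lemma Aop_quadratic_form:
  fixes f :: "real^'d::finite \<Rightarrow> real"
  assumes "j \<le> m"
  shows "(\<Sum>x\<in>Omega L k m. f x * Aop L k m a mu0 j f x)
    = (\<Sum>x\<in>Omega L k m. f x * (- Lap L k m f x)) + mubar mu0 L k * (\<Sum>x\<in>Omega L k m. (f x)\<^sup>2)
      + aj a L j / (real L ^ j * \<eta>)\<^sup>2 * real L ^ (j * CARD('d)) * (\<Sum>y\<in>OmegaJ L k m j. (QO L k m j f y)\<^sup>2)"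
proof -
  define B where "B = aj a L j / (real L ^ j * \<eta>)\<^sup>2"
  define fibre where "fibre y = {x \<in> Omega L k m. block_corner L k j x = y}" for y :: "real^'d"
  have "(\<Sum>x\<in>Omega L k m. f x * QO L k m j f (block_corner L k j x))
      = (\<Sum>y\<in>OmegaJ L k m j. \<Sum>x\<in>fibre y. f x * QO L k m j f (block_corner L k j x))"
    unfolding fibre_def
    by (rule sum.group[symmetric, OF finite_Omega finite_OmegaJ[OF assms]])
      (use block_corner_OmegaJ[OF assms] in auto)
  also have "\<dots> = (\<Sum>y\<in>OmegaJ L k m j. \<Sum>x\<in>fibre y. f x * QO L k m j f y)"
    by (intro sum.cong) (simp_all add: fibre_def)
  also have "\<dots> = (\<Sum>y\<in>OmegaJ L k m j. real L ^ (j * CARD('d)) * (QO L k m j f y)\<^sup>2)"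
    by (rule sum.cong) (simp_all add: sum_fibre_QO[OF assms] fibre_def power2_eq_square
        flip: sum_distrib_right)
  finally have QO_part: "(\<Sum>x\<in>Omega L k m. f x * QO L k m j f (block_corner L k j x))
      = real L ^ (j * CARD('d)) * (\<Sum>y\<in>OmegaJ L k m j. (QO L k m j f y)\<^sup>2)"
    by (simp add: sum_distrib_left)
  have "(\<Sum>x\<in>Omega L k m. f x * Aop L k m a mu0 j f x)
      = (\<Sum>x\<in>Omega L k m. f x * (- Lap L k m f x) + mubar mu0 L k * (f x)\<^sup>2
          + B * (f x * QO L k m j f (block_corner L k j x)))"
    using assms by (intro sum.cong) (simp_all add: Aop_def QOadj_eval B_def power2_eq_square algebra_simps)
  also have "\<dots> = (\<Sum>x\<in>Omega L k m. f x * (- Lap L k m f x)) + mubar mu0 L k * (\<Sum>x\<in>Omega L k m. (f x)\<^sup>2)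
      + B * (\<Sum>x\<in>Omega L k m. f x * QO L k m j f (block_corner L k j x))"
    by (simp only: sum.distrib sum_distrib_left)
  finally show ?thesis
    by (simp only: QO_part B_def mult.assoc)
qed

lemma edge_invariant_if_Lap_form_zero:
  fixes f :: "real^'d::finite \<Rightarrow> real"
  assumes "(\<Sum>x\<in>Omega L k m. f x * (- Lap L k m f x)) = 0"
    and "z \<in> Omega L k m" and "z + \<eta> *\<^sub>R axis \<mu> 1 \<in> Omega L k m"
  shows "f (z + \<eta> *\<^sub>R axis \<mu> 1) = f z"
proof -
  define edges where "edges \<nu> = {z \<in> Omega L k m. z + \<eta> *\<^sub>R axis \<nu> 1 \<in> Omega L k m}" for \<nu> :: 'd
  have fin: "finite (edges \<mu>)" for \<mu>
    unfolding edges_def by (rule finite_subset[OF _ finite_Omega]) auto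
  have "(\<Sum>\<mu>\<in>UNIV. \<Sum>z\<in>edges \<mu>. (f (z + \<eta> *\<^sub>R axis \<mu> 1) - f z)\<^sup>2) = 0"
    using assms(1) eta_pos unfolding Lap_quadratic_form edges_def by simp
  then have "(\<Sum>z\<in>edges \<mu>. (f (z + \<eta> *\<^sub>R axis \<mu> 1) - f z)\<^sup>2) = 0"
    by (subst (asm) sum_nonneg_eq_0_iff) (auto intro: sum_nonneg)
  then have "(f (z + \<eta> *\<^sub>R axis \<mu> 1) - f z)\<^sup>2 = 0"
    using assms(2,3) by (subst (asm) sum_nonneg_eq_0_iff[OF fin]) (auto simp: edges_def)
  then show ?thesis by simp
qed

lemma Aop_kernel:
  fixes f :: "real^'d::finite \<Rightarrow> real"
  assumes j1: "1 \<le> j" and jm: "j \<le> m" and a: "0 < a" and mu: "0 \<le> mu0"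
    and f: "f \<in> sp (Omega L k m)" and A0: "Aop L k m a mu0 j f = 0"
  shows "f = 0"
proof -
  define T1 where "T1 = (\<Sum>x\<in>Omega L k m. f x * (- Lap L k m f x))"
  define T2 where "T2 = (\<Sum>x\<in>Omega L k m. (f x)\<^sup>2)"
  define T3 where "T3 = (\<Sum>y\<in>OmegaJ L k m j. (QO L k m j f y)\<^sup>2)"
  define B where "B = aj a L j / (real L ^ j * \<eta>)\<^sup>2 * real L ^ (j * CARD('d))"
  have B: "B > 0"
    using aj_pos[OF j1 a] eta_pos L_gt_1 by (simp add: B_def)
  have "T1 \<ge> 0" "T2 \<ge> 0" "T3 \<ge> 0" "mubar mu0 L k \<ge> 0"
    unfolding T1_def T2_def T3_def Lap_quadratic_form
    using mu by (auto intro!: divide_nonneg_nonneg sum_nonneg simp: mubar_def)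
  moreover have "T1 + mubar mu0 L k * T2 + B * T3 = 0"
    using Aop_quadratic_form[OF jm, of f a mu0] A0 by (simp add: T1_def T2_def T3_def B_def)
  ultimately have "T1 = 0" and "B * T3 = 0"
    using B by (smt (verit) mult_nonneg_nonneg)+
  then have T3: "T3 = 0"
    using B by simp
  have block_const: "f x = f (block_corner L k j x)" if "x \<in> Omega L k m" for x
    using block_corner_invariant edge_invariant_if_Lap_form_zero[OF \<open>T1 = 0\<close>[unfolded T1_def]] that
    by blast
  have f_corner: "f y = 0" if y: "y \<in> OmegaJ L k m j" for y
  proof -
    define fibre where "fibre = {x \<in> Omega L k m. block_corner L k j x = y}"
    have "finite fibre" "y \<in> fibre"
      using y block_corner_idem[OF jm] OmegaJ_subset[OF jm] finite_Omega by (auto simp: fibre_def)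
    moreover have "\<forall>y\<in>OmegaJ L k m j. (QO L k m j f y)\<^sup>2 = 0"
      using T3 unfolding T3_def by (simp add: sum_nonneg_eq_0_iff[OF finite_OmegaJ[OF jm]])
    then have "(\<Sum>x\<in>fibre. f x) = 0"
      using sum_fibre_QO[OF jm y, of f] y by (simp add: fibre_def)
    moreover have "(\<Sum>x\<in>fibre. f x) = (\<Sum>x\<in>fibre. f y)"
      using block_const by (intro sum.cong) (auto simp: fibre_def)
    ultimately show "f y = 0"
      by (simp add: card_gt_0_iff) (metis card_0_eq empty_iff)
  qed
  show "f = 0"
  proof
    fix x
    show "f x = 0 x"
      using f block_const f_corner block_corner_OmegaJ[OF jm] by (cases "x \<in> Omega L k m") (auto simp: sp_def)
  qed
qed

lemma Aop_bij:
  assumes "1 \<le> j" and "j \<le> m" and "0 < a" and "0 \<le> mu0"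
  shows "bij_betw (Aop L k m a mu0 j) (sp (Omega L k m :: (real^'d::finite) set)) (sp (Omega L k m))"
  using bij_betw_sp_if_linear_injective[OF finite_Omega linear_Aop Aop_sp] Aop_kernel[OF assms] by blast

end

section \<open>The recursion\<close>

lemma parallel_sum_identity:
  fixes r u a s :: real
  assumes r: "r > 1" and u: "0 < u" "u < 1" and a: "a > 0" and s: "s > 0"
  shows "(a*(1-1/r)/(1-u/r)) / (r * s) = ((a*(1-1/r)/(1-u))/s) * (a/(r * s)) / ((a*(1-1/r)/(1-u))/s + a/(r * s))"
proof -
  have r0: "r > 0" using r by simp
  define t where "t = 1 - 1/r"
  have t: "t > 0" using r by (simp add: t_def field_simps)
  have h1: "1 - u/r > 0" using u r by (simp add: field_simps)
  have h2: "1 - u > 0" using u by simp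
  define X where "X = (a*t/(1-u))/s"
  define Y where "Y = a/(r * s)"
  define Z where "Z = (a*t/(1-u/r)) / (r * s)"
  have X: "X > 0" using a t h2 s by (simp add: X_def)
  have Y: "Y > 0" using a r0 s by (simp add: Y_def)
  have Z: "Z > 0" using a t h1 r0 s by (simp add: Z_def)
  have iX: "1/X = s*(1-u)/(a*t)" by (simp add: X_def)
  have iY: "1/Y = r* s/a" by (simp add: Y_def)
  have iZ: "1/Z = s*(r*(1-u/r))/(a*t)" by (simp add: Z_def)
  have e1: "r*(1-u/r) = r - u" using r0 by (simp add: field_simps)
  have e2: "(1-u) + r*t = r - u" using r0 by (simp add: t_def field_simps)
  have "1/X + 1/Y = s*((1-u) + r*t)/(a*t)" unfolding iX iY using a t by (simp add: field_simps)
  also have "\<dots> = 1/Z" unfolding iZ e1 e2 ..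
  finally have eq: "1/Z = 1/X + 1/Y" ..
  have "X*Y/(X+Y) = 1/(1/X + 1/Y)" using X Y by (simp add: field_simps)
  also have "\<dots> = 1/(1/Z)" by (simp only: eq)
  also have "\<dots> = Z" by simp
  finally show ?thesis unfolding X_def Y_def Z_def t_def by simp
qed

context block_lattice begin

definition coarse_proj :: "nat \<Rightarrow> 'd::finite fn \<Rightarrow> 'd fn" where
  "coarse_proj j w = Qstepadj L k m j (Qstep L k m j w)"

definition avg_weight :: "real \<Rightarrow> nat \<Rightarrow> real" where
  "avg_weight a j = aj a L j / (real L ^ j * \<eta>)\<^sup>2"

definition step_weight :: "real \<Rightarrow> nat \<Rightarrow> real" where
  "step_weight a j = a / (real L ^ Suc j * \<eta>)\<^sup>2"

(* The inverse of avg_weight + step_weight * coarse_proj on functions on \<Omega>_j. *)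
definition shift_inv :: "real \<Rightarrow> nat \<Rightarrow> 'd::finite fn \<Rightarrow> 'd fn" where
  "shift_inv a j w = (1 / avg_weight a j) *\<^sub>R (w - coarse_proj j w)
    + (1 / (avg_weight a j + step_weight a j)) *\<^sub>R coarse_proj j w"

lemma weights_pos: "1 \<le> j \<Longrightarrow> 0 < a \<Longrightarrow> 0 < avg_weight a j \<and> 0 < step_weight a j"
  using aj_pos eta_pos L_gt_1 by (simp add: avg_weight_def step_weight_def)

lemma avg_weight_Suc:
  assumes j1: "1 \<le> j" and a: "0 < a"
  shows "avg_weight a (Suc j) = avg_weight a j * step_weight a j / (avg_weight a j + step_weight a j)"
proof -
  define r where "r = real L ^ 2"
  define u where "u = 1 / real L ^ (2*j)"
  define s where "s = (real L ^ j * \<eta>)^2"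
  have r: "r > 1" using L_gt_1 r_def by simp
  have Lj: "real L ^ (2*j) > 1" using L_gt_1 j1 by simp
  have u: "0 < u" "u < 1" using Lj u_def L_gt_1 by (auto simp: divide_less_eq)
  have s: "s > 0" using L_gt_1 eta_pos s_def by simp
  have e1: "aj a L (Suc j) = a*(1-1/r)/(1-u/r)"
    by (simp add: aj_def r_def u_def power_add power_mult_distrib mult.commute power2_eq_square)
  have e2: "aj a L j = a*(1-1/r)/(1-u)" by (simp add: aj_def r_def u_def)
  have e3: "(real L ^ Suc j * \<eta>)^2 = r * s" by (simp add: r_def s_def power_mult_distrib)
  show ?thesis
    unfolding avg_weight_def step_weight_def e1 e2 e3 s_def[symmetric] using parallel_sum_identity[OF r u a s] .
qed

lemma linear_coarse_proj: "linear (coarse_proj j)"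
  using linear_compose[OF linear_Qstep linear_Qstepadj] by (simp add: o_def coarse_proj_def[abs_def])

lemma coarse_proj_idem: "Suc j \<le> m \<Longrightarrow> coarse_proj j (coarse_proj j w) = coarse_proj j w"
  by (simp add: coarse_proj_def Qstep_Qstepadj Qstep_sp)

lemma coarse_proj_sp [simp]: "coarse_proj j w \<in> sp (OmegaJ L k m j)"
  by (simp add: coarse_proj_def)

lemma Aop_Suc_eq:
  assumes "1 \<le> j" and jm: "Suc j \<le> m" and "0 < a"
  shows "Aop L k m a mu0 (Suc j) x
    = Aop L k m a mu0 j x - (avg_weight a j)\<^sup>2 *\<^sub>R QOadj L k m j (shift_inv a j (QO L k m j x))"
proof
  fix y
  define B where "B = avg_weight a j"
  define c where "c = step_weight a j"
  have "B \<noteq> 0" "B + c \<noteq> 0"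
    using weights_pos[OF assms(1,3)] by (simp_all add: B_def c_def)
  have coarse: "QOadj L k m (Suc j) (QO L k m (Suc j) x) = QOadj L k m j (coarse_proj j (QO L k m j x))"
    by (simp add: coarse_proj_def QO_comp[OF jm] QOadj_comp[OF jm])
  have shift: "B\<^sup>2 *\<^sub>R shift_inv a j v = B *\<^sub>R v - (B * c / (B + c)) *\<^sub>R coarse_proj j v" for v
    using linear_idempotent_shift_inverse(5)[OF linear_coarse_proj coarse_proj_idem[OF jm]
        \<open>B \<noteq> 0\<close> \<open>B + c \<noteq> 0\<close>]
    by (simp add: shift_inv_def B_def c_def)
  have "(avg_weight a j)\<^sup>2 *\<^sub>R QOadj L k m j (shift_inv a j (QO L k m j x))
      = QOadj L k m j (B\<^sup>2 *\<^sub>R shift_inv a j (QO L k m j x))"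
    by (simp add: B_def linear_scale[OF linear_QOadj])
  also have "\<dots> = B *\<^sub>R QOadj L k m j (QO L k m j x)
      - (B * c / (B + c)) *\<^sub>R QOadj L k m j (coarse_proj j (QO L k m j x))"
    by (simp only: shift linear_diff[OF linear_QOadj] linear_scale[OF linear_QOadj])
  finally have "((avg_weight a j)\<^sup>2 *\<^sub>R QOadj L k m j (shift_inv a j (QO L k m j x))) y
      = B * QOadj L k m j (QO L k m j x) y - (B * c / (B + c)) * QOadj L k m j (coarse_proj j (QO L k m j x)) y"
    by simp
  then show "Aop L k m a mu0 (Suc j) x y
      = (Aop L k m a mu0 j x - (avg_weight a j)\<^sup>2 *\<^sub>R QOadj L k m j (shift_inv a j (QO L k m j x))) y"
    using avg_weight_Suc[OF assms(1,3)] unfolding Aop_def coarse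
    by (cases "y \<in> Omega L k m") (simp_all add: QOadj_def avg_weight_def B_def c_def algebra_simps)
qed

lemma Cpre_eq:
  assumes j1: "1 \<le> j" and jm: "Suc j \<le> m" and a: "0 < a" and mu: "0 \<le> mu0"
    and w: "w \<in> sp (OmegaJ L k m j)"
  shows "Cpre L k m a mu0 j w = avg_weight a j *\<^sub>R w + step_weight a j *\<^sub>R coarse_proj j w
    - QO L k m j (the_inv_into (sp (Omega L k m)) (Aop L k m a mu0 j) ((avg_weight a j)\<^sup>2 *\<^sub>R QOadj L k m j w))"
proof
  fix y
  have "the_inv_into (sp (Omega L k m)) (Aop L k m a mu0 j) ((avg_weight a j)\<^sup>2 *\<^sub>R QOadj L k m j w)
      = (avg_weight a j)\<^sup>2 *\<^sub>R Geta L k m a mu0 j (QOadj L k m j w)"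
    using inverse_scaleR_on[OF sp_subspace linear_Aop Aop_bij[OF j1 _ a mu] QOadj_sp] jm
    by (simp add: Geta_def inv_on_def)
  moreover have "(avg_weight a j)\<^sup>2 = (aj a L j)\<^sup>2 / (real L ^ j * \<eta>) ^ 4"
    by (simp add: avg_weight_def power_divide flip: power_mult)
  moreover have "w y = 0" "coarse_proj j w y = 0" "QO L k m j g y = 0" if "y \<notin> OmegaJ L k m j" for g
    using that w coarse_proj_sp QO_sp unfolding sp_def by blast+
  ultimately show "Cpre L k m a mu0 j w y = (avg_weight a j *\<^sub>R w + step_weight a j *\<^sub>R coarse_proj j w
      - QO L k m j (the_inv_into (sp (Omega L k m)) (Aop L k m a mu0 j) ((avg_weight a j)\<^sup>2 *\<^sub>R QOadj L k m j w))) y"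
    by (cases "y \<in> OmegaJ L k m j")
      (simp_all add: Cpre_def Delta_def coarse_proj_def step_weight_def linear_scale[OF linear_QO],
        simp add: avg_weight_def)
qed

lemma Geta_Suc:
  fixes f :: "'d::finite fn"
  assumes j1: "1 \<le> j" and jm: "Suc j \<le> m" and a: "0 < a" and mu: "0 \<le> mu0"
  shows "invertible_on (OmegaJ L k m j :: (real^'d) set) (Cpre L k m a mu0 j)"
    and "f \<in> sp (Omega L k m) \<Longrightarrow>
      Geta L k m a mu0 (Suc j) f = (\<lambda>x. Term L k m a mu0 j f x + Geta L k m a mu0 j f x)"
proof -
  define B where "B = avg_weight a j"
  define c where "c = step_weight a j"
  have "B \<noteq> 0" "B + c \<noteq> 0"
    using weights_pos[OF j1 a] by (simp_all add: B_def c_def)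
  note shift = linear_idempotent_shift_inverse[OF linear_coarse_proj coarse_proj_idem[OF jm] this]
  have D_W: "shift_inv a j w \<in> sp (OmegaJ L k m j)" if "w \<in> sp (OmegaJ L k m j)" for w
    using that by (simp add: shift_inv_def subspace_add subspace_diff subspace_scale sp_subspace)
  have E_W: "B *\<^sub>R w + c *\<^sub>R coarse_proj j w \<in> sp (OmegaJ L k m j)" if "w \<in> sp (OmegaJ L k m j)" for w
    using that by (simp add: subspace_add subspace_scale sp_subspace)
  interpret woodbury "sp (Omega L k m)" "sp (OmegaJ L k m j)" "Aop L k m a mu0 j" "Aop L k m a mu0 (Suc j)"
    "\<lambda>w. B\<^sup>2 *\<^sub>R QOadj L k m j w" "QO L k m j" "shift_inv a j" "\<lambda>w. B *\<^sub>R w + c *\<^sub>R coarse_proj j w"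
    "Cpre L k m a mu0 j"
  proof (rule woodbury.intro)
    show "linear (\<lambda>w. B *\<^sub>R w + c *\<^sub>R coarse_proj j w)"
      using shift(1) .
    show "linear (shift_inv a j)"
      using shift(2) unfolding shift_inv_def[abs_def] B_def c_def .
    show "\<And>w. B *\<^sub>R shift_inv a j w + c *\<^sub>R coarse_proj j (shift_inv a j w) = w"
      using shift(3) unfolding shift_inv_def B_def c_def .
    show "\<And>w. shift_inv a j (B *\<^sub>R w + c *\<^sub>R coarse_proj j w) = w"
      using shift(4) unfolding shift_inv_def B_def c_def .
    show "\<And>x. Aop L k m a mu0 (Suc j) x = Aop L k m a mu0 j x - B\<^sup>2 *\<^sub>R QOadj L k m j (shift_inv a j (QO L k m j x))"
      using Aop_Suc_eq[OF j1 jm a] by (simp add: B_def)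
    show "\<And>w. w \<in> sp (OmegaJ L k m j) \<Longrightarrow> Cpre L k m a mu0 j w = B *\<^sub>R w + c *\<^sub>R coarse_proj j w
        - QO L k m j (the_inv_into (sp (Omega L k m)) (Aop L k m a mu0 j) (B\<^sup>2 *\<^sub>R QOadj L k m j w))"
      using Cpre_eq[OF j1 jm a mu] by (simp add: B_def c_def)
  qed (use Aop_bij[OF j1 _ a mu] Aop_bij[OF _ jm a mu] jm D_W E_W in
      \<open>simp_all add: sp_subspace linear_Aop linear_QO linear_compose_scale_right[OF linear_QOadj] subspace_scale\<close>)
  show "invertible_on (OmegaJ L k m j :: (real^'d) set) (Cpre L k m a mu0 j)"
    using bij_S by (simp add: invertible_on_def)
  show "Geta L k m a mu0 (Suc j) f = (\<lambda>x. Term L k m a mu0 j f x + Geta L k m a mu0 j f x)"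
    if "f \<in> sp (Omega L k m)"
  proof -
    have "Geta L k m a mu0 (Suc j) f
        = Geta L k m a mu0 j f + B\<^sup>2 *\<^sub>R Geta L k m a mu0 j (QOadj L k m j (Cj L k m a mu0 j (QO L k m j (Geta L k m a mu0 j f))))"
      using woodbury_identity[OF that] inverse_scaleR_on[OF sp_subspace linear_Aop Aop_bij[OF j1 _ a mu] QOadj_sp] jm
      by (simp add: Geta_def Cj_def inv_on_def)
    then show ?thesis
      by (simp add: Term_def B_def avg_weight_def power_divide power_mult_distrib fun_eq_iff)
  qed
qed

end

lemma GkOmega_eq_Geta:
  assumes "L > 1"
  shows "GkOmega L k m a mu0 = (Geta L k m a mu0 k :: 'd::finite fn \<Rightarrow> 'd fn)"
proof -
  have unit_scale: "real L ^ k * eta L k = 1"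
    using assms by (simp add: eta_def)
  show ?thesis
    unfolding GkOmega_def Geta_def Aop_def unit_scale power_one div_by_1 ..
qed

theorem mainTheorem7:
  fixes L k m :: nat and a mu0 :: real
  assumes "odd L" and "L > 1" and "k \<ge> 1" and "m \<ge> k"
    and "0 < a" and "a \<le> 1" and "mu0 \<ge> 0"
  shows "(\<forall>j\<in>{1..k-1}.
            invertible_on (OmegaJ L k m j :: (real^'d) set) (Cpre L k m a mu0 j)
          \<and> (\<forall>f\<in>sp (Omega L k m :: (real^'d) set).
               Geta L k m a mu0 (j + 1) f = (\<lambda>x. Term L k m a mu0 j f x + Geta L k m a mu0 j f x)))
      \<and> (\<forall>f\<in>sp (Omega L k m :: (real^'d) set).
           GkOmega L k m a mu0 f = Geta L k m a mu0 k f
         \<and> Geta L k m a mu0 k f = (\<lambda>x. (\<Sum>j=1..<k. Term L k m a mu0 j f x) + Geta L k m a mu0 1 f x))"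
proof -
  interpret block_lattice L k m
    using \<open>L > 1\<close> by unfold_locales
  have invertible: "invertible_on (OmegaJ L k m j :: (real^'d) set) (Cpre L k m a mu0 j)"
    if "1 \<le> j" "j < k" for j
    using Geta_Suc(1)[of j] that assms by auto
  have recursion: "Geta L k m a mu0 (Suc j) f = (\<lambda>x. Term L k m a mu0 j f x + Geta L k m a mu0 j f x)"
    if "1 \<le> j" "j < k" "f \<in> sp (Omega L k m :: (real^'d) set)" for j f
    using Geta_Suc(2)[of j] that assms by auto
  have telescoped: "Geta L k m a mu0 k f = (\<lambda>x. (\<Sum>j=1..<k. Term L k m a mu0 j f x) + Geta L k m a mu0 1 f x)"
    if "f \<in> sp (Omega L k m :: (real^'d) set)" for f
  proof
    fix x
    show "Geta L k m a mu0 k f x = (\<Sum>j=1..<k. Term L k m a mu0 j f x) + Geta L k m a mu0 1 f x"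
      by (rule telescoping_sum) (use recursion[OF _ _ that] \<open>k \<ge> 1\<close> in auto)
  qed
  have "GkOmega L k m a mu0 = (Geta L k m a mu0 k :: 'd fn \<Rightarrow> 'd fn)"
    using GkOmega_eq_Geta \<open>L > 1\<close> .
  then show ?thesis
    using invertible recursion telescoped by auto
qed

end
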